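(* Let $G$ be a finite, simple, connected graph with $\dim_{wt}(G)=2$. Then $G$ has no complete vertex of degree more than three.
   Context: $d(x,y)$ is the shortest-path distance. A vertex $v$ is a complete vertex if its neighborhood $N(v)$ induces a complete graph $K_{d(v)}$. A set $W\subseteq V(G)$ is a resolving set if for every two distinct vertices $y,z$ there is $x\in W$ with $d(y,x)\ne d(z,x)$. A set $W$ is a weak total resolving set (WTR-set) if $W$ is resolving and, for every $w\in W$ and every $x\in V(G)\setminus W$, there is $w'\in W\setminus\{w\}$ with $d(x,w')\ne d(w,w')$. $\dim_{wt}(G)$ is the minimum cardinality of a WTR-set. *)

theory Defs
  imports Main
begin

definition simple_graph :: "'a set \<Rightarrow> ('a \<Rightarrow> 'a \<Rightarrow> bool) \<Rightarrow> bool" where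
  "simple_graph V E \<longleftrightarrow> finite V \<and> (\<forall>x y. E x y \<longrightarrow> x \<in> V \<and> y \<in> V)
     \<and> (\<forall>x y. E x y \<longrightarrow> E y x) \<and> (\<forall>x. \<not> E x x)"

definition connected_graph :: "'a set \<Rightarrow> ('a \<Rightarrow> 'a \<Rightarrow> bool) \<Rightarrow> bool" where
  "connected_graph V E \<longleftrightarrow> V \<noteq> {} \<and> (\<forall>x\<in>V. \<forall>y\<in>V. \<exists>n. (E ^^ n) x y)"

definition gdist :: "('a \<Rightarrow> 'a \<Rightarrow> bool) \<Rightarrow> 'a \<Rightarrow> 'a \<Rightarrow> nat" where
  "gdist E x y = (LEAST n. (E ^^ n) x y)"

definition neighbors :: "('a \<Rightarrow> 'a \<Rightarrow> bool) \<Rightarrow> 'a \<Rightarrow> 'a set" where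
  "neighbors E v = {u. E v u}"

definition degree :: "('a \<Rightarrow> 'a \<Rightarrow> bool) \<Rightarrow> 'a \<Rightarrow> nat" where
  "degree E v = card (neighbors E v)"

definition complete_vertex :: "('a \<Rightarrow> 'a \<Rightarrow> bool) \<Rightarrow> 'a \<Rightarrow> bool" where
  "complete_vertex E v \<longleftrightarrow>
     (\<forall>x\<in>neighbors E v. \<forall>y\<in>neighbors E v. x \<noteq> y \<longrightarrow> E x y)"

definition resolving_set :: "'a set \<Rightarrow> ('a \<Rightarrow> 'a \<Rightarrow> bool) \<Rightarrow> 'a set \<Rightarrow> bool" where
  "resolving_set V E W \<longleftrightarrow> W \<subseteq> V \<and>
     (\<forall>y\<in>V. \<forall>z\<in>V. y \<noteq> z \<longrightarrow> (\<exists>x\<in>W. gdist E y x \<noteq> gdist E z x))"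

definition wtr_set :: "'a set \<Rightarrow> ('a \<Rightarrow> 'a \<Rightarrow> bool) \<Rightarrow> 'a set \<Rightarrow> bool" where
  "wtr_set V E W \<longleftrightarrow> resolving_set V E W \<and>
     (\<forall>w\<in>W. \<forall>x\<in>V - W. \<exists>w'\<in>W - {w}. gdist E x w' \<noteq> gdist E w w')"

definition dim_wt :: "'a set \<Rightarrow> ('a \<Rightarrow> 'a \<Rightarrow> bool) \<Rightarrow> nat" where
  "dim_wt V E = (LEAST k. \<exists>W. wtr_set V E W \<and> card W = k)"

end

theory Submission
  imports Defs "HOL-Library.FuncSet"
begin

text \<open>Along an edge the distance to any fixed vertex changes by at most one, so on a
  clique it takes at most two consecutive values. Hence the distance vectors of the
  vertices of a clique to a resolving set W, which are pairwise distinct, range over a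
  product of |W| two-element sets, and a clique has at most 2^|W| vertices. The closed
  neighbourhood of a complete vertex of degree at least 4 is a clique on at least 5
  vertices, which is impossible when |W| = 2.\<close>

lemma gdist_walk:
  assumes "connected_graph V E" "x \<in> V" "y \<in> V"
  shows "(E ^^ gdist E x y) x y"
proof -
  obtain n where "(E ^^ n) x y"
    using assms unfolding connected_graph_def by blast
  then show ?thesis unfolding gdist_def by (rule LeastI)
qed

lemma gdist_self: "gdist E x x = 0"
  unfolding gdist_def by (rule Least_equality) auto

lemma gdist_eq_0_iff:
  assumes "connected_graph V E" "x \<in> V" "y \<in> V"
  shows "gdist E x y = 0 \<longleftrightarrow> x = y"
  using gdist_walk[OF assms] by (auto simp: gdist_self)

lemma gdist_adjacent_le:
  assumes "simple_graph V E" "connected_graph V E" "E u w" "a \<in> V"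
  shows "gdist E u a \<le> Suc (gdist E w a)"
proof -
  have "w \<in> V" using assms(1,3) unfolding simple_graph_def by blast
  then have "(E ^^ gdist E w a) w a" using assms(2,4) by (simp add: gdist_walk)
  then have "(E ^^ Suc (gdist E w a)) u a" using assms(3) by (rule relpowp_Suc_I2[rotated])
  then show ?thesis unfolding gdist_def by (rule Least_le)
qed

lemma wtr_set_vertex_set:
  assumes "connected_graph V E"
  shows "wtr_set V E V"
  unfolding wtr_set_def resolving_set_def
proof (intro conjI ballI impI)
  fix y z assume "y \<in> V" "z \<in> V" "y \<noteq> z"
  then have "gdist E y y \<noteq> gdist E z y"
    using gdist_eq_0_iff[OF assms] by (simp add: gdist_self)
  then show "\<exists>x\<in>V. gdist E y x \<noteq> gdist E z x" using \<open>y \<in> V\<close> by blast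
qed auto

lemma dim_wt_attained:
  assumes "connected_graph V E"
  shows "\<exists>W. wtr_set V E W \<and> card W = dim_wt V E"
proof -
  have "\<exists>W. wtr_set V E W \<and> card W = card V"
    using wtr_set_vertex_set[OF assms] by blast
  then show ?thesis unfolding dim_wt_def by (rule LeastI)
qed

lemma consecutive_values_on_clique:
  fixes g :: "'a \<Rightarrow> nat"
  assumes "finite K" "K \<noteq> {}"
    and "\<And>x y. x \<in> K \<Longrightarrow> y \<in> K \<Longrightarrow> x \<noteq> y \<Longrightarrow> g x \<le> Suc (g y)"
  shows "\<exists>p. g ` K \<subseteq> {p, Suc p}"
proof -
  have "Min (g ` K) \<in> g ` K" using assms(1,2) by simp
  then obtain u0 where u0: "u0 \<in> K" "g u0 = Min (g ` K)" by auto
  have "g u \<in> {Min (g ` K), Suc (Min (g ` K))}" if "u \<in> K" for u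
  proof -
    have "Min (g ` K) \<le> g u" using assms(1) that by simp
    moreover have "g u \<le> Suc (Min (g ` K))"
      using assms(3)[OF that u0(1)] u0 by (cases "u = u0") auto
    ultimately show ?thesis by auto
  qed
  then show ?thesis by blast
qed

lemma card_clique_le_resolving_set:
  assumes "simple_graph V E" "connected_graph V E"
    and "resolving_set V E W" "finite W" "K \<subseteq> V"
    and clique: "\<And>x y. x \<in> K \<Longrightarrow> y \<in> K \<Longrightarrow> x \<noteq> y \<Longrightarrow> E x y"
  shows "card K \<le> 2 ^ card W"
proof (cases "K = {}")
  case False
  have "finite K" using assms(1,5) finite_subset unfolding simple_graph_def by blast
  have WV: "W \<subseteq> V" using assms(3) unfolding resolving_set_def by blast
  have "\<exists>p. (\<lambda>u. gdist E u a) ` K \<subseteq> {p, Suc p}" if "a \<in> W" for a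
    using \<open>finite K\<close> False
    by (rule consecutive_values_on_clique)
       (use that WV in \<open>auto intro: gdist_adjacent_le[OF assms(1,2) clique]\<close>)
  then obtain p where p: "\<And>a. a \<in> W \<Longrightarrow> (\<lambda>u. gdist E u a) ` K \<subseteq> {p a, Suc (p a)}"
    by metis
  define vec where "vec u = restrict (\<lambda>a. gdist E u a) W" for u
  have "inj_on vec K"
  proof
    fix y z assume "y \<in> K" "z \<in> K" "vec y = vec z"
    then have "gdist E y a = gdist E z a" if "a \<in> W" for a
      using that unfolding vec_def by (metis restrict_apply')
    then show "y = z"
      using assms(3) \<open>y \<in> K\<close> \<open>z \<in> K\<close> \<open>K \<subseteq> V\<close>
      unfolding resolving_set_def by blast
  qed
  moreover have "vec ` K \<subseteq> PiE W (\<lambda>a. {p a, Suc (p a)})"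
    using p unfolding vec_def by (fastforce simp: PiE_iff)
  moreover have "finite (PiE W (\<lambda>a. {p a, Suc (p a)}))"
    using \<open>finite W\<close> by (simp add: finite_PiE)
  ultimately have "card K \<le> card (PiE W (\<lambda>a. {p a, Suc (p a)}))"
    using card_inj_on_le by blast
  also have "\<dots> = 2 ^ card W"
    by (simp add: card_PiE \<open>finite W\<close> numeral_2_eq_2)
  finally show ?thesis .
qed simp

lemma closed_neighbors_clique:
  assumes "simple_graph V E" "complete_vertex E v"
    and "x \<in> insert v (neighbors E v)" "y \<in> insert v (neighbors E v)" "x \<noteq> y"
  shows "E x y"
proof -
  have "E x y" if "y \<in> neighbors E x" for x y
    using that unfolding neighbors_def by simp
  moreover have "E x y" if "E y x" for x y
    using assms(1) that unfolding simple_graph_def by simp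
  ultimately show ?thesis
    using assms(2-5) unfolding complete_vertex_def by (metis insert_iff)
qed

lemma card_closed_neighbors:
  assumes "simple_graph V E" "v \<in> V"
  shows "card (insert v (neighbors E v)) = Suc (degree E v)"
proof -
  have "neighbors E v \<subseteq> V" "v \<notin> neighbors E v"
    using assms(1) unfolding simple_graph_def neighbors_def by auto
  moreover have "finite V" using assms(1) unfolding simple_graph_def by blast
  ultimately show ?thesis
    unfolding degree_def by (simp add: finite_subset)
qed

theorem theorem3:
  fixes V :: "'a set" and E :: "'a \<Rightarrow> 'a \<Rightarrow> bool"
  assumes "simple_graph V E" and "connected_graph V E"
    and "dim_wt V E = 2"
  shows "\<not> (\<exists>v\<in>V. complete_vertex E v \<and> degree E v > 3)"
proof
  assume "\<exists>v\<in>V. complete_vertex E v \<and> degree E v > 3"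
  then obtain v where "v \<in> V" "complete_vertex E v" "degree E v > 3" by blast
  obtain W where W: "wtr_set V E W" "card W = 2"
    using dim_wt_attained[OF assms(2)] assms(3) by auto
  then have "resolving_set V E W" "finite W"
    unfolding wtr_set_def by (auto intro: card_ge_0_finite)
  moreover have "insert v (neighbors E v) \<subseteq> V"
    using assms(1) \<open>v \<in> V\<close> unfolding simple_graph_def neighbors_def by auto
  ultimately have "card (insert v (neighbors E v)) \<le> 2 ^ card W"
    using card_clique_le_resolving_set[OF assms(1,2)]
      closed_neighbors_clique[OF assms(1) \<open>complete_vertex E v\<close>] by blast
  then show False
    using W(2) card_closed_neighbors[OF assms(1) \<open>v \<in> V\<close>] \<open>degree E v > 3\<close> by simp
qed

end
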